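(* Let $(X,d)$ be a metric space, $\mu$ a non-atomic Borel measure on $X$, $m$ a Borel measure on $X$ and $0<p<\infty$. If $f:X\to\mathbb R$ is $ACC_p$ and $f=0$ $m$-almost everywhere, then the family $\Gamma=\{\gamma\in\Gamma^\mu: f\circ\gamma\not\equiv0\}$ has $\mathrm{Mod}_p(\Gamma)=0$.
   Context: A path is a continuous map $\gamma:[a,b]\to X$; a subpath is a restriction to a subinterval, trivial if that interval is a point; $\mathrm{Im}(\gamma)=\gamma([a,b])$. $\mu$ non-atomic: $\mu(\{x\})=0$ for all $x$. $\Gamma^\mu$ is the set of all non-trivial injective paths $\gamma$ with $0<\mu(\mathrm{Im}(\tilde\gamma))<\infty$ for every non-trivial subpath $\tilde\gamma$. For Borel $g\ge0$, $\int_\gamma g:=\int_{\mathrm{Im}(\gamma)}g\,d\mu$. For $\gamma:[a,b]\to X$ in $\Gamma^\mu$, $h(\gamma)=\mu(\mathrm{Im}(\gamma))$, $\nu_\gamma(x)=\mu(\gamma([a,x]))$ (a bijection $[a,b]\to[0,h(\gamma)]$) and $\gamma_h=\gamma\circ\nu_\gamma^{-1}$. For $\Gamma\subset\Gamma^\mu$, $\mathrm{Mod}_p(\Gamma)=\inf\int_Xg^p\,dm$ over Borel $g\ge0$ with $\int_\gamma g\ge1$ for all $\gamma\in\Gamma$. $f$ is $ACC_p$ if $f\circ\gamma_h$ is absolutely continuous on $[0,h(\gamma)]$ for all $\gamma\in\Gamma^\mu$ outside a family of $p$-modulus zero. *)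

theory Defs
  imports "HOL-Analysis.Analysis"
begin

text \<open>A path is represented as a triple (a, b, gamma) standing for gamma restricted to [a,b].\<close>
type_synonym 'a rpath = "real \<times> real \<times> (real \<Rightarrow> 'a)"

definition pimage :: "'a rpath \<Rightarrow> 'a set" where
  "pimage P = (case P of (a, b, g) \<Rightarrow> g ` {a..b})"

definition Gamma_mu :: "'a::metric_space measure \<Rightarrow> 'a rpath set" where
  "Gamma_mu mu = {(a, b, g). a < b \<and> continuous_on {a..b} g \<and> inj_on g {a..b} \<and>
     (\<forall>c d. a \<le> c \<and> c < d \<and> d \<le> b \<longrightarrow>
        0 < emeasure mu (g ` {c..d}) \<and> emeasure mu (g ` {c..d}) < \<infinity>)}"

definition enn_powr :: "ennreal \<Rightarrow> real \<Rightarrow> ennreal" where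
  "enn_powr x p = (if x = \<infinity> then \<infinity> else ennreal (enn2real x powr p))"

definition Mod :: "real \<Rightarrow> 'a::metric_space measure \<Rightarrow> 'a measure \<Rightarrow> 'a rpath set \<Rightarrow> ennreal" where
  "Mod p mu m \<Gamma> = (INF g \<in> {g :: 'a \<Rightarrow> ennreal. g \<in> borel_measurable borel \<and>
        (\<forall>P\<in>\<Gamma>. (\<integral>\<^sup>+ x \<in> pimage P. g x \<partial>mu) \<ge> 1)}.
      \<integral>\<^sup>+ x. enn_powr (g x) p \<partial>m)"

definition hlen :: "'a measure \<Rightarrow> 'a rpath \<Rightarrow> real" where
  "hlen mu P = measure mu (pimage P)"

definition nu :: "'a measure \<Rightarrow> 'a rpath \<Rightarrow> real \<Rightarrow> real" where
  "nu mu P = (case P of (a, b, g) \<Rightarrow> (\<lambda>x. measure mu (g ` {a..x})))"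

definition gamma_h :: "'a measure \<Rightarrow> 'a rpath \<Rightarrow> real \<Rightarrow> 'a" where
  "gamma_h mu P = (case P of (a, b, g) \<Rightarrow> g \<circ> inv_into {a..b} (nu mu P))"

definition abs_cont_on :: "real set \<Rightarrow> (real \<Rightarrow> real) \<Rightarrow> bool" where
  "abs_cont_on S f \<longleftrightarrow> (\<forall>e>0. \<exists>d>0. \<forall>n::nat. \<forall>u v :: nat \<Rightarrow> real.
      (\<forall>i<n. u i \<le> v i \<and> {u i..v i} \<subseteq> S) \<and>
      disjoint_family_on (\<lambda>i. {u i<..<v i}) {..<n} \<and>
      (\<Sum>i<n. v i - u i) < d \<longrightarrow> (\<Sum>i<n. \<bar>f (v i) - f (u i)\<bar>) < e)"

definition ACC :: "real \<Rightarrow> 'a::metric_space measure \<Rightarrow> 'a measure \<Rightarrow> ('a \<Rightarrow> real) \<Rightarrow> bool" where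
  "ACC p mu m f \<longleftrightarrow> (\<exists>\<Gamma>0 \<subseteq> Gamma_mu mu. Mod p mu m \<Gamma>0 = 0 \<and>
     (\<forall>P \<in> Gamma_mu mu - \<Gamma>0. abs_cont_on {0..hlen mu P} (f \<circ> gamma_h mu P)))"

end

theory Submission
  imports Defs
begin

text \<open>If \<open>f \<circ> \<gamma>\<close> is nonzero at a point of a path \<open>\<gamma>\<close> along which \<open>f\<close> is absolutely
  continuous, then \<open>f \<circ> \<gamma>\<close> is continuous: it is \<open>f \<circ> \<gamma>\<^sub>h\<close> composed with the length function
  \<open>\<nu>\<^sub>\<gamma>\<close>, which is continuous because \<open>\<mu>\<close> has no atoms. So \<open>f \<circ> \<gamma>\<close> stays nonzero on a
  non-trivial subpath, whose image has positive \<open>\<mu>\<close>-measure and lies in an \<open>m\<close>-null Borel set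
  \<open>N \<supseteq> {f \<noteq> 0}\<close>. Any function admissible for the exceptional family of the \<open>ACC\<^sub>p\<close>
  condition therefore becomes admissible for \<open>\<Gamma>\<close> once it is set to \<open>\<infinity>\<close> on \<open>N\<close>, and this
  does not change its \<open>m\<close>-integral; hence \<open>Mod\<^sub>p(\<Gamma>) = 0\<close>.\<close>

lemma Gamma_muD:
  assumes "(a, b, g) \<in> Gamma_mu mu"
  shows "a < b" and "continuous_on {a..b} g" and "inj_on g {a..b}"
    and "\<And>c d. a \<le> c \<Longrightarrow> c < d \<Longrightarrow> d \<le> b \<Longrightarrow>
           0 < emeasure mu (g ` {c..d}) \<and> emeasure mu (g ` {c..d}) < \<infinity>"
  using assms unfolding Gamma_mu_def by auto

lemma abs_cont_on_imp_continuous_on: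
  assumes "is_interval S" and "abs_cont_on S f"
  shows "continuous_on S f"
  unfolding continuous_on_iff
proof (intro ballI allI impI)
  fix x e :: real
  assume "x \<in> S" "0 < e"
  from assms(2)[unfolded abs_cont_on_def, rule_format, OF \<open>0 < e\<close>]
  obtain d where "d > 0" and d: "\<forall>(n::nat) u v. (\<forall>i<n. u i \<le> v i \<and> {u i..v i} \<subseteq> S) \<and>
      disjoint_family_on (\<lambda>i. {u i<..<v i}) {..<n} \<and> (\<Sum>i<n. v i - u i) < d \<longrightarrow>
      (\<Sum>i<n. \<bar>f (v i) - f (u i)\<bar>) < e"
    by blast
  show "\<exists>d>0. \<forall>y\<in>S. dist y x < d \<longrightarrow> dist (f y) (f x) < e"
  proof (intro exI[of _ d] conjI ballI impI \<open>d > 0\<close>)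
    fix y
    assume "y \<in> S" "dist y x < d"
    have "min x y \<in> S" and "max x y \<in> S"
      using \<open>x \<in> S\<close> \<open>y \<in> S\<close> by (auto simp: min_def max_def)
    then have "{min x y..max x y} \<subseteq> S"
      by (intro subsetI mem_is_interval_1_I[OF assms(1) \<open>min x y \<in> S\<close> \<open>max x y \<in> S\<close>]) auto
    moreover have "max x y - min x y < d"
      using \<open>dist y x < d\<close> by (cases "x \<le> y") (auto simp: dist_real_def)
    ultimately have "\<bar>f (max x y) - f (min x y)\<bar> < e"
      using d[rule_format, of 1 "\<lambda>_. min x y" "\<lambda>_. max x y"]
      by (simp add: disjoint_family_on_def)
    then show "dist (f y) (f x) < e"
      by (cases "x \<le> y") (simp_all add: dist_real_def abs_minus_commute)
  qed
qed

lemma nonzero_on_subinterval: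
  fixes h :: "real \<Rightarrow> real"
  assumes "continuous_on {a..b} h" and "a < b" and "t \<in> {a..b}" and "h t \<noteq> 0"
  shows "\<exists>c d. a \<le> c \<and> c < d \<and> d \<le> b \<and> (\<forall>x\<in>{c..d}. h x \<noteq> 0)"
proof -
  obtain \<delta> where "\<delta> > 0" and \<delta>: "\<And>x. x \<in> {a..b} \<Longrightarrow> dist x t < \<delta> \<Longrightarrow> dist (h x) (h t) < \<bar>h t\<bar>"
    using assms(1,3,4) unfolding continuous_on_iff by (metis zero_less_abs_iff)
  define c where "c = max a (t - \<delta>/2)"
  define d where "d = min b (t + \<delta>/2)"
  have "\<forall>x\<in>{c..d}. h x \<noteq> 0"
  proof
    fix x assume "x \<in> {c..d}"
    then have "dist (h x) (h t) < \<bar>h t\<bar>"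
      using \<delta> \<open>\<delta> > 0\<close> by (auto simp: c_def d_def dist_real_def)
    then show "h x \<noteq> 0" by (auto simp: dist_real_def)
  qed
  moreover have "a \<le> c" "c < d" "d \<le> b"
    using assms(2,3) \<open>\<delta> > 0\<close> by (auto simp: c_def d_def)
  ultimately show ?thesis by blast
qed

lemma sets_path_image:
  fixes g :: "real \<Rightarrow> 'a::metric_space"
  assumes "sets mu = sets borel" and "continuous_on {c..d} g"
  shows "g ` {c..d} \<in> sets mu"
  using compact_imp_closed[OF compact_continuous_image[OF assms(2) compact_Icc]] assms(1)
  by simp

context
  fixes mu :: "'a::metric_space measure" and a b :: real and g :: "real \<Rightarrow> 'a"
  assumes sets_mu: "sets mu = sets borel"
    and nonatomic: "\<forall>x. emeasure mu {x} = 0"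
    and path: "(a, b, g) \<in> Gamma_mu mu"
begin

lemma path_image_fmeasurable:
  assumes "a \<le> c" and "c \<le> d" and "d \<le> b"
  shows "g ` {c..d} \<in> fmeasurable mu"
proof (rule fmeasurableI)
  show "g ` {c..d} \<in> sets mu"
    by (rule sets_path_image[OF sets_mu continuous_on_subset[OF Gamma_muD(2)[OF path]]])
      (use assms in auto)
  show "emeasure mu (g ` {c..d}) < \<infinity>"
  proof (cases "c = d")
    case True
    then show ?thesis using nonatomic by simp
  next
    case False
    then show ?thesis using Gamma_muD(4)[OF path, of c d] assms by simp
  qed
qed

lemma measure_path_image_pos:
  assumes "a \<le> c" and "c < d" and "d \<le> b"
  shows "0 < measure mu (g ` {c..d})"
  using Gamma_muD(4)[OF path assms] by (simp add: measure_def enn2real_positive_iff)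

lemma measure_path_image_split:
  assumes "a \<le> x" and "x \<le> y" and "y \<le> z" and "z \<le> b"
  shows "measure mu (g ` {x..z}) = measure mu (g ` {x..y}) + measure mu (g ` {y..z})"
proof -
  have "{x..z} = {x..y} \<union> {y..z}"
    using assms by auto
  then have union: "g ` {x..z} = g ` {x..y} \<union> g ` {y..z}"
    by (simp add: image_Un)
  have overlap: "g ` {x..y} \<inter> g ` {y..z} = {g y}"
  proof
    show "{g y} \<subseteq> g ` {x..y} \<inter> g ` {y..z}"
      using assms by auto
    show "g ` {x..y} \<inter> g ` {y..z} \<subseteq> {g y}"
    proof
      fix w
      assume "w \<in> g ` {x..y} \<inter> g ` {y..z}"
      then obtain u v where uv: "u \<in> {x..y}" "v \<in> {y..z}" "w = g u" "g u = g v"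
        by auto
      have "u = v"
        by (rule inj_onD[OF Gamma_muD(3)[OF path] uv(4)]) (use uv assms in auto)
      with uv show "w \<in> {g y}"
        by auto
    qed
  qed
  have "measure mu {g y} = 0"
    using nonatomic by (simp add: measure_def)
  moreover have "g ` {x..y} \<in> fmeasurable mu" and "g ` {y..z} \<in> fmeasurable mu"
    using assms by (auto intro!: path_image_fmeasurable)
  ultimately show ?thesis
    by (simp add: union measure_Un3 overlap)
qed

lemma nu_eq_measure: "nu mu (a, b, g) x = measure mu (g ` {a..x})"
  by (simp add: nu_def)

lemma strict_mono_on_nu: "strict_mono_on {a..b} (nu mu (a, b, g))"
proof (rule strict_mono_onI)
  fix x y
  assume "x \<in> {a..b}" and "y \<in> {a..b}" and "x < y"
  then show "nu mu (a, b, g) x < nu mu (a, b, g) y"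
    using measure_path_image_split[of a x y] measure_path_image_pos[of x y]
    by (simp add: nu_eq_measure)
qed

lemma gamma_h_nu:
  assumes "x \<in> {a..b}"
  shows "gamma_h mu (a, b, g) (nu mu (a, b, g) x) = g x"
  using inv_into_f_f[OF strict_mono_on_imp_inj_on[OF strict_mono_on_nu] assms]
  by (simp add: gamma_h_def)

lemma nu_image_subset: "nu mu (a, b, g) ` {a..b} \<subseteq> {0..hlen mu (a, b, g)}"
proof
  fix s
  assume "s \<in> nu mu (a, b, g) ` {a..b}"
  then obtain x where "x \<in> {a..b}" and "s = nu mu (a, b, g) x"
    by blast
  then show "s \<in> {0..hlen mu (a, b, g)}"
    using measure_path_image_split[of a x b]
    by (simp add: nu_eq_measure hlen_def pimage_def)
qed

lemma measure_path_image_shrinks: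
  assumes t: "t \<in> {a..b}" and r: "decseq r" "r \<longlonglongrightarrow> 0"
  shows "(\<lambda>n. measure mu (g ` {max a (t - r n)..min b (t + r n)})) \<longlonglongrightarrow> 0"
proof -
  define I where "I n = {max a (t - r n)..min b (t + r n)}" for n
  have r_nonneg: "0 \<le> r n" for n
    using decseq_ge[OF r] .
  have I_fmeasurable: "g ` I n \<in> fmeasurable mu" for n
    unfolding I_def using t r_nonneg[of n] by (intro path_image_fmeasurable) auto
  have "I n \<subseteq> I m" if "m \<le> n" for m n
    using decseqD[OF r(1) that] by (auto simp: I_def)
  then have "decseq (\<lambda>n. g ` I n)"
    by (simp add: decseq_def image_mono)
  then have "(\<lambda>n. measure mu (g ` I n)) \<longlonglongrightarrow> measure mu (\<Inter>n. g ` I n)"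
    using I_fmeasurable fmeasurableD2 by (intro Lim_measure_decseq) auto
  moreover have "(\<Inter>n. I n) = {t}"
  proof
    show "{t} \<subseteq> (\<Inter>n. I n)"
      using t r_nonneg by (auto simp: I_def)
    show "(\<Inter>n. I n) \<subseteq> {t}"
    proof
      fix s
      assume "s \<in> (\<Inter>n. I n)"
      then have s_I: "s \<in> I n" for n
        by blast
      have "\<bar>s - t\<bar> \<le> r n" for n
        using s_I[of n] by (auto simp: I_def abs_le_iff)
      then have "\<bar>s - t\<bar> \<le> 0"
        by (intro LIMSEQ_le_const[OF r(2)]) auto
      then show "s \<in> {t}"
        by simp
    qed
  qed
  then have "(\<Inter>n. g ` I n) = {g t}"
    using image_INT[OF Gamma_muD(3)[OF path], of UNIV I 0] by (auto simp: I_def)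
  ultimately show ?thesis
    using nonatomic by (simp add: I_def measure_def)
qed

lemma continuous_on_nu: "continuous_on {a..b} (nu mu (a, b, g))"
  unfolding continuous_on_iff
proof (intro ballI allI impI)
  fix t e :: real
  assume t: "t \<in> {a..b}" and "0 < e"
  define r where "r n = inverse (real (Suc n))" for n
  define I where "I n = {max a (t - r n)..min b (t + r n)}" for n
  have r_pos: "0 < r n" for n
    by (simp add: r_def)
  have "decseq r"
    by (intro decseq_SucI) (simp add: r_def field_simps)
  from order_tendstoD(2)[OF measure_path_image_shrinks[OF t this] \<open>0 < e\<close>]
  obtain n where n: "measure mu (g ` I n) < e"
    unfolding r_def I_def using LIMSEQ_inverse_real_of_nat
    by (meson eventually_sequentially order.refl)
  show "\<exists>d>0. \<forall>x\<in>{a..b}. dist x t < d \<longrightarrow> dist (nu mu (a, b, g) x) (nu mu (a, b, g) t) < e"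
  proof (intro exI[of _ "r n"] conjI ballI impI r_pos)
    fix x
    assume x: "x \<in> {a..b}" "dist x t < r n"
    have "dist (nu mu (a, b, g) x) (nu mu (a, b, g) t) = measure mu (g ` {min x t..max x t})"
      using measure_path_image_split[of a x t] measure_path_image_split[of a t x] x t
      by (cases "x \<le> t") (auto simp: nu_eq_measure dist_real_def)
    also have "\<dots> \<le> measure mu (g ` I n)"
    proof (rule measure_mono_fmeasurable)
      show "g ` {min x t..max x t} \<subseteq> g ` I n"
        using x t by (intro image_mono) (auto simp: I_def dist_real_def)
      show "g ` {min x t..max x t} \<in> sets mu"
        using x t by (intro fmeasurableD path_image_fmeasurable) auto
      show "g ` I n \<in> fmeasurable mu"
        using t r_pos[of n] by (auto simp: I_def intro!: path_image_fmeasurable)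
    qed
    also have "\<dots> < e"
      by (rule n)
    finally show "dist (nu mu (a, b, g) x) (nu mu (a, b, g) t) < e" .
  qed
qed

lemma continuous_on_comp_path:
  assumes "abs_cont_on {0..hlen mu (a, b, g)} (f \<circ> gamma_h mu (a, b, g))"
  shows "continuous_on {a..b} (f \<circ> g)"
proof (rule continuous_on_eq)
  show "continuous_on {a..b} (\<lambda>x. (f \<circ> gamma_h mu (a, b, g)) (nu mu (a, b, g) x))"
    using abs_cont_on_imp_continuous_on[OF is_interval_cc assms] continuous_on_nu nu_image_subset
    by (rule continuous_on_compose2)
qed (simp add: gamma_h_nu)

lemma path_charges_nonzero_set:
  assumes "abs_cont_on {0..hlen mu (a, b, g)} (f \<circ> gamma_h mu (a, b, g))"
    and "t \<in> {a..b}" and "f (g t) \<noteq> 0"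
  shows "\<exists>A\<in>sets mu. A \<subseteq> g ` {a..b} \<and> 0 < emeasure mu A \<and> (\<forall>x\<in>A. f x \<noteq> 0)"
proof -
  have "(f \<circ> g) t \<noteq> 0"
    using assms(3) by simp
  then obtain c d where cd: "a \<le> c" "c < d" "d \<le> b" and nonzero: "\<forall>x\<in>{c..d}. (f \<circ> g) x \<noteq> 0"
    using nonzero_on_subinterval[OF continuous_on_comp_path[OF assms(1)] Gamma_muD(1)[OF path]
        assms(2)] by blast
  show ?thesis
  proof (intro bexI conjI)
    show "g ` {c..d} \<in> sets mu"
      using cd by (intro fmeasurableD path_image_fmeasurable) auto
    show "g ` {c..d} \<subseteq> g ` {a..b}"
      using cd by (intro image_mono) auto
    show "0 < emeasure mu (g ` {c..d})"
      using Gamma_muD(4)[OF path cd] by simp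
    show "\<forall>x\<in>g ` {c..d}. f x \<noteq> 0"
      using nonzero by simp
  qed
qed

end

lemma Mod_le_if_paths_charge_null_set:
  assumes "N \<in> sets borel" and "N \<in> null_sets m"
    and charges: "\<And>P. P \<in> \<Gamma> - \<Gamma>0 \<Longrightarrow> \<exists>A\<in>sets mu. A \<subseteq> pimage P \<inter> N \<and> 0 < emeasure mu A"
  shows "Mod p mu m \<Gamma> \<le> Mod p mu m \<Gamma>0"
  unfolding Mod_def
proof (rule INF_mono)
  fix \<rho>
  assume \<rho>: "\<rho> \<in> {\<rho>. \<rho> \<in> borel_measurable borel \<and> (\<forall>P\<in>\<Gamma>0. 1 \<le> (\<integral>\<^sup>+ x \<in> pimage P. \<rho> x \<partial>mu))}"
  define \<rho>' where "\<rho>' x = (if x \<in> N then \<infinity> else \<rho> x)" for x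
  have "\<rho>' \<in> borel_measurable borel"
    using \<rho> assms(1) unfolding \<rho>'_def by (intro measurable_If_set) auto
  moreover have "1 \<le> (\<integral>\<^sup>+ x \<in> pimage P. \<rho>' x \<partial>mu)" if "P \<in> \<Gamma>" for P
  proof (cases "P \<in> \<Gamma>0")
    case True
    then have "1 \<le> (\<integral>\<^sup>+ x \<in> pimage P. \<rho> x \<partial>mu)"
      using \<rho> by auto
    also have "\<dots> \<le> (\<integral>\<^sup>+ x \<in> pimage P. \<rho>' x \<partial>mu)"
      by (intro nn_integral_mono) (simp add: \<rho>'_def split: split_indicator)
    finally show ?thesis .
  next
    case False
    with that obtain A where A: "A \<in> sets mu" "A \<subseteq> pimage P \<inter> N" "0 < emeasure mu A"
      using charges by blast
    have "\<infinity> = \<infinity> * emeasure mu A"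
      using A(3) by (simp add: ennreal_top_mult)
    also have "\<dots> = (\<integral>\<^sup>+ x. \<infinity> * indicator A x \<partial>mu)"
      by (rule nn_integral_cmult_indicator[OF A(1), symmetric])
    also have "\<dots> \<le> (\<integral>\<^sup>+ x \<in> pimage P. \<rho>' x \<partial>mu)"
      using A by (intro nn_integral_mono) (auto simp: \<rho>'_def split: split_indicator)
    finally show ?thesis
      by (simp add: top_unique)
  qed
  moreover have "(\<integral>\<^sup>+ x. enn_powr (\<rho>' x) p \<partial>m) = (\<integral>\<^sup>+ x. enn_powr (\<rho> x) p \<partial>m)"
    using AE_not_in[OF assms(2)] by (intro nn_integral_cong_AE) (auto simp: \<rho>'_def)
  ultimately show "\<exists>\<rho>'\<in>{\<rho>. \<rho> \<in> borel_measurable borel \<and> (\<forall>P\<in>\<Gamma>. 1 \<le> (\<integral>\<^sup>+ x \<in> pimage P. \<rho> x \<partial>mu))}.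
      (\<integral>\<^sup>+ x. enn_powr (\<rho>' x) p \<partial>m) \<le> (\<integral>\<^sup>+ x. enn_powr (\<rho> x) p \<partial>m)"
    by auto
qed

lemma nonzero_path_charges_null_set:
  assumes "sets mu = sets borel" and "\<forall>x. emeasure mu {x} = 0"
    and AC: "\<forall>P \<in> Gamma_mu mu - \<Gamma>0. abs_cont_on {0..hlen mu P} (f \<circ> gamma_h mu P)"
    and N: "{x. f x \<noteq> 0} \<subseteq> N"
    and P: "P \<in> {P \<in> Gamma_mu mu. \<exists>t \<in> {fst P..fst (snd P)}. f (snd (snd P) t) \<noteq> 0} - \<Gamma>0"
  shows "\<exists>A\<in>sets mu. A \<subseteq> pimage P \<inter> N \<and> 0 < emeasure mu A"
proof -
  obtain a b g where P_eq: "P = (a, b, g)"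
    by (cases P) auto
  with P have path: "(a, b, g) \<in> Gamma_mu mu" and "(a, b, g) \<notin> \<Gamma>0"
    and "\<exists>t\<in>{a..b}. f (g t) \<noteq> 0"
    by auto
  then obtain t where t: "t \<in> {a..b}" "f (g t) \<noteq> 0"
    by blast
  have "abs_cont_on {0..hlen mu (a, b, g)} (f \<circ> gamma_h mu (a, b, g))"
    using AC path \<open>(a, b, g) \<notin> \<Gamma>0\<close> by blast
  then obtain A where A: "A \<in> sets mu" "A \<subseteq> g ` {a..b}" "0 < emeasure mu A"
    and "\<forall>x\<in>A. f x \<noteq> 0"
    using path_charges_nonzero_set[OF assms(1,2) path _ t(1)] t(2) by blast
  with N show ?thesis
    by (auto simp: P_eq pimage_def)
qed

theorem lemma3p7:
  fixes mu m :: "'a::metric_space measure" and p :: real and f :: "'a \<Rightarrow> real"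
  assumes "sets mu = sets borel" and "\<forall>x. emeasure mu {x} = 0"
    and "sets m = sets borel"
    and "0 < p"
    and "ACC p mu m f"
    and "AE x in m. f x = 0"
  shows "Mod p mu m {P \<in> Gamma_mu mu. \<exists>t \<in> {fst P..fst (snd P)}. f (snd (snd P) t) \<noteq> 0} = 0"
proof -
  obtain \<Gamma>0 where "Mod p mu m \<Gamma>0 = 0"
    and AC: "\<forall>P \<in> Gamma_mu mu - \<Gamma>0. abs_cont_on {0..hlen mu P} (f \<circ> gamma_h mu P)"
    using assms(5) unfolding ACC_def by blast
  obtain N where N: "{x \<in> space m. f x \<noteq> 0} \<subseteq> N" "N \<in> null_sets m"
    using assms(6) by (rule AE_E3) auto
  have "space m = UNIV" and "N \<in> sets borel"
    using sets_eq_imp_space_eq[OF assms(3)] N(2) assms(3) by auto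
  then have "Mod p mu m {P \<in> Gamma_mu mu. \<exists>t \<in> {fst P..fst (snd P)}. f (snd (snd P) t) \<noteq> 0}
      \<le> Mod p mu m \<Gamma>0"
    using N by (intro Mod_le_if_paths_charge_null_set nonzero_path_charges_null_set[OF assms(1,2) AC])
      auto
  with \<open>Mod p mu m \<Gamma>0 = 0\<close> show ?thesis
    by simp
qed

end
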